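(* With the notation of the context, for every $r\in(0,1)$ and $v=(v_1,v_2)\in\mathbb{R}^2$, $$T^Q\big(\rho(r,0),\rho(r+v_1t,v_2t)\big)=G(r,v)\,t^2+O(t^3)\quad\text{as }t\downarrow0,$$ where $$G(r,v)=\max_{\phi\in[0,2\pi)}\frac{\big(2v_1\cos\phi-(2r-1)v_2\sin\phi\big)^2}{16\big(1+(2r-1)\cos\phi\big)}.$$
   Context: For $r\in[0,1]$ and $\theta\in\mathbb{R}$, $\rho(r,\theta)=\tfrac12[\mathbb{1}+(2r-1)(\sigma_1\sin\theta+\sigma_3\cos\theta)]$, with $\sigma_i$ the Pauli matrices. Let $C^Q=\tfrac12(\mathbb{1}-S)$ with $S$ the swap on $\mathbb{C}^2\otimes\mathbb{C}^2$. Define $T^Q(\rho^A,\rho^B)=\min\operatorname{Tr}(C^Q\rho^{AB})$, the minimum taken over density matrices $\rho^{AB}$ on $\mathbb{C}^2\otimes\mathbb{C}^2$ with marginals $\operatorname{Tr}_B\rho^{AB}=\rho^A$ and $\operatorname{Tr}_A\rho^{AB}=\rho^B$. Known formula (assumed): $T^Q(\rho(s,0),\rho(r,\theta))=\max_{\phi\in[0,2\pi)}\tfrac14\big(\sqrt{1+(2s-1)\cos\phi}-\sqrt{1+(2r-1)\cos(\theta+\phi)}\big)^2$. *)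

theory Defs
  imports Complex_Main "HOL-Library.Landau_Symbols" "Jordan_Normal_Form.Matrix"
begin

definition pauli1 :: "complex mat" where
  "pauli1 = mat 2 2 (\<lambda>(i,j). if i \<noteq> j then 1 else 0)"

definition pauli3 :: "complex mat" where
  "pauli3 = mat 2 2 (\<lambda>(i,j). if i = j then (if i = 0 then 1 else -1) else 0)"

definition qubit :: "real \<Rightarrow> real \<Rightarrow> complex mat" where
  "qubit r \<theta> = (1/2 :: complex) \<cdot>\<^sub>m (1\<^sub>m 2 + complex_of_real (2*r - 1) \<cdot>\<^sub>m
      (complex_of_real (sin \<theta>) \<cdot>\<^sub>m pauli1 + complex_of_real (cos \<theta>) \<cdot>\<^sub>m pauli3))"

text \<open>C^2 tensor C^2 with basis |a b> at index 2*a + b (a, b in {0,1}).\<close>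
definition swap_op :: "complex mat" where
  "swap_op = mat 4 4 (\<lambda>(i,j). if i div 2 = j mod 2 \<and> i mod 2 = j div 2 then 1 else 0)"

definition cost_Q :: "complex mat" where
  "cost_Q = (1/2 :: complex) \<cdot>\<^sub>m (1\<^sub>m 4 - swap_op)"

definition ptrace_B :: "complex mat \<Rightarrow> complex mat" where
  "ptrace_B M = mat 2 2 (\<lambda>(a,c). \<Sum>b<2. M $$ (2*a + b, 2*c + b))"

definition ptrace_A :: "complex mat \<Rightarrow> complex mat" where
  "ptrace_A M = mat 2 2 (\<lambda>(b,d). \<Sum>a<2. M $$ (2*a + b, 2*a + d))"

definition mtrace :: "complex mat \<Rightarrow> complex" where
  "mtrace M = (\<Sum>i<dim_row M. M $$ (i,i))"

definition density_mat :: "nat \<Rightarrow> complex mat \<Rightarrow> bool" where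
  "density_mat n M \<longleftrightarrow> M \<in> carrier_mat n n \<and> mtrace M = 1 \<and>
     (\<forall>v :: nat \<Rightarrow> complex. let q = (\<Sum>i<n. \<Sum>j<n. cnj (v i) * M $$ (i,j) * v j)
        in Im q = 0 \<and> Re q \<ge> 0)"

text \<open>Quantum optimal transport cost T^Q (the minimum exists by compactness; Inf is used).\<close>
definition TQ :: "complex mat \<Rightarrow> complex mat \<Rightarrow> real" where
  "TQ \<rho>A \<rho>B = Inf {Re (mtrace (cost_Q * \<rho>AB)) | \<rho>AB.
      density_mat 4 \<rho>AB \<and> ptrace_B \<rho>AB = \<rho>A \<and> ptrace_A \<rho>AB = \<rho>B}"

definition G_coef :: "real \<Rightarrow> real \<times> real \<Rightarrow> real" where
  "G_coef r v = (SUP \<phi>\<in>{0..<2*pi}.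
      (2 * fst v * cos \<phi> - (2*r - 1) * snd v * sin \<phi>)^2 / (16 * (1 + (2*r - 1) * cos \<phi>)))"

end

theory Submission
  imports Defs
begin

text \<open>By the known formula, \<open>T\<^sup>Q\<close> is the supremum over \<open>\<phi>\<close> of \<open>(\<surd>u - \<surd>w)\<^sup>2 / 4\<close> with
  \<open>u = 1 + a cos \<phi>\<close>, \<open>a = 2r - 1\<close>, and \<open>w\<close> the perturbed value. Expanding the cosine,
  \<open>w - u = L + O(t\<^sup>2)\<close> with \<open>L = t (2 v\<^sub>1 cos \<phi> - a v\<^sub>2 sin \<phi>)\<close>, uniformly in \<open>\<phi>\<close>.
  Since \<open>u \<ge> 1 - |a| > 0\<close>, rationalising \<open>\<surd>w - \<surd>u = (w - u) / (\<surd>u + \<surd>w)\<close> gives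
  \<open>(\<surd>u - \<surd>w)\<^sup>2 = L\<^sup>2 / (4u) + O(t\<^sup>3)\<close>, again uniformly in \<open>\<phi>\<close>, and a uniform error
  passes through the supremum.\<close>

lemma abs_cos_minus_one_le: "\<bar>cos x - 1\<bar> \<le> x\<^sup>2 / 2" for x :: real
proof -
  have "cos x - 1 = - 2 * (sin (x/2))\<^sup>2"
    using cos_double_sin[of "x/2"] by simp
  moreover have "(sin (x/2))\<^sup>2 \<le> (x/2)\<^sup>2"
    using abs_sin_x_le_abs_x[of "x/2"] by (metis abs_ge_zero power2_abs power_mono)
  ultimately show ?thesis by (simp add: power_divide)
qed

lemma abs_sin_minus_le: "\<bar>sin x - x\<bar> \<le> x\<^sup>2 / 2" for x :: real
  using Maclaurin_sin_bound[of x 2] by (simp add: sin_coeff_def numeral_2_eq_2)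

lemma abs_cos_diff_le: "\<bar>cos x - cos y\<bar> \<le> \<bar>x - y\<bar>" for x y :: real
proof -
  have "\<bar>cos x - cos y\<bar> = 2 * \<bar>sin ((x + y) / 2)\<bar> * \<bar>sin ((y - x) / 2)\<bar>"
    by (simp add: cos_diff_cos abs_mult)
  also have "\<dots> \<le> 2 * 1 * \<bar>(y - x) / 2\<bar>"
    by (intro mult_mono abs_sin_x_le_abs_x) auto
  finally show ?thesis by simp
qed

lemma abs_cos_add_taylor_le: "\<bar>cos (\<theta> + \<phi>) - cos \<phi> + \<theta> * sin \<phi>\<bar> \<le> \<theta>\<^sup>2" for \<theta> \<phi> :: real
proof -
  have "cos (\<theta> + \<phi>) - cos \<phi> + \<theta> * sin \<phi> = cos \<phi> * (cos \<theta> - 1) - sin \<phi> * (sin \<theta> - \<theta>)"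
    by (simp add: cos_add algebra_simps)
  also have "\<bar>\<dots>\<bar> \<le> \<bar>cos \<phi>\<bar> * \<bar>cos \<theta> - 1\<bar> + \<bar>sin \<phi>\<bar> * \<bar>sin \<theta> - \<theta>\<bar>"
    by (metis abs_mult abs_triangle_ineq4)
  also have "\<dots> \<le> 1 * (\<theta>\<^sup>2 / 2) + 1 * (\<theta>\<^sup>2 / 2)"
    by (intro add_mono mult_mono abs_cos_minus_one_le abs_sin_minus_le) auto
  finally show ?thesis by simp
qed

lemma sqrt_diff_square_approx:
  fixes u w L m t K1 K2 A :: real
  assumes m: "0 < m" "m\<^sup>2 \<le> u" and w: "0 \<le> w" and t: "0 \<le> t"
    and lin: "\<bar>w - u - L\<bar> \<le> K1 * t\<^sup>2" and inc: "\<bar>w - u\<bar> \<le> K2 * t" and L: "\<bar>L\<bar> \<le> A * t"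
  shows "\<bar>(sqrt u - sqrt w)\<^sup>2 - L\<^sup>2 / (4 * u)\<bar>
           \<le> (K1 / m + A * K2 / (2 * m^3)) * (K2 / m + A / (2 * m)) * t^3"
proof -
  define S where "S = sqrt u + sqrt w"
  define X where "X = sqrt w - sqrt u"
  define Y where "Y = L / (2 * sqrt u)"
  have u: "0 < u" using m by (smt (verit) zero_less_power)
  have su: "m \<le> sqrt u" using m real_le_rsqrt by blast
  have S: "m \<le> S" using su w by (simp add: S_def add_increasing2)
  have "X * S = (sqrt w)\<^sup>2 - (sqrt u)\<^sup>2"
    unfolding X_def S_def by (simp add: power2_eq_square algebra_simps)
  hence XS: "X * S = w - u" using u w by simp
  have YS: "2 * sqrt u * Y = L" using u by (simp add: Y_def)
  have Y: "Y\<^sup>2 = L\<^sup>2 / (4 * u)"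
    using u by (simp add: Y_def power_divide power_mult_distrib)
  have bX: "\<bar>X\<bar> \<le> K2 * t / m"
  proof -
    have "\<bar>X\<bar> = \<bar>w - u\<bar> / S" using XS m S by (simp add: eq_divide_eq abs_div_pos flip: XS)
    also have "\<dots> \<le> K2 * t / m" using m S inc by (intro frac_le) auto
    finally show ?thesis .
  qed
  have bY: "\<bar>Y\<bar> \<le> A * t / (2 * m)"
    unfolding Y_def using m su L by (simp add: abs_div_pos frac_le)
  have "(X - Y) * S = (w - u - L) - Y * X"
    using XS YS by (simp add: S_def X_def algebra_simps)
  hence "\<bar>X - Y\<bar> * S \<le> \<bar>w - u - L\<bar> + \<bar>Y\<bar> * \<bar>X\<bar>"
    using m S by (metis abs_mult abs_of_pos abs_triangle_ineq4 order.strict_trans2)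
  also have "\<dots> \<le> K1 * t\<^sup>2 + (A * t / (2 * m)) * (K2 * t / m)"
    using lin bX bY by (intro add_mono mult_mono) auto
  finally have "\<bar>X - Y\<bar> * m \<le> K1 * t\<^sup>2 + (A * t / (2 * m)) * (K2 * t / m)"
    using S by (meson abs_ge_zero mult_left_mono order.trans)
  hence "\<bar>X - Y\<bar> \<le> (K1 * t\<^sup>2 + (A * t / (2 * m)) * (K2 * t / m)) / m"
    using m by (simp add: pos_le_divide_eq)
  also have "\<dots> = (K1 / m + A * K2 / (2 * m^3)) * t\<^sup>2"
    using m by (simp add: field_simps power2_eq_square power3_eq_cube)
  finally have diff: "\<bar>X - Y\<bar> \<le> (K1 / m + A * K2 / (2 * m^3)) * t\<^sup>2" .
  have sum: "\<bar>X + Y\<bar> \<le> (K2 / m + A / (2 * m)) * t"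
    using abs_triangle_ineq[of X Y] bX bY by (simp add: field_simps)
  have "(sqrt u - sqrt w)\<^sup>2 - L\<^sup>2 / (4 * u) = (X - Y) * (X + Y)"
    unfolding Y[symmetric] by (simp add: X_def power2_eq_square algebra_simps)
  hence "\<bar>(sqrt u - sqrt w)\<^sup>2 - L\<^sup>2 / (4 * u)\<bar> = \<bar>X - Y\<bar> * \<bar>X + Y\<bar>"
    by (simp add: abs_mult)
  also have "\<dots> \<le> (K1 / m + A * K2 / (2 * m^3)) * t\<^sup>2 * ((K2 / m + A / (2 * m)) * t)"
    using diff sum by (intro mult_mono) auto
  finally show ?thesis by (simp add: power2_eq_square power3_eq_cube mult_ac)
qed

lemma abs_cos_perturbation_linear_le:
  fixes a v1 v2 t \<phi> :: real
  assumes a: "\<bar>a\<bar> \<le> 1"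
  shows "\<bar>(a + 2 * v1 * t) * cos (v2 * t + \<phi>) - a * cos \<phi> - t * (2 * v1 * cos \<phi> - a * v2 * sin \<phi>)\<bar>
           \<le> (v2\<^sup>2 + 2 * \<bar>v1\<bar> * \<bar>v2\<bar>) * t\<^sup>2"
proof -
  define \<theta> where "\<theta> = v2 * t"
  have lip: "\<bar>cos (\<theta> + \<phi>) - cos \<phi>\<bar> \<le> \<bar>\<theta>\<bar>"
    using abs_cos_diff_le[of "\<theta> + \<phi>" \<phi>] by simp
  have "(a + 2 * v1 * t) * cos (\<theta> + \<phi>) - a * cos \<phi> - t * (2 * v1 * cos \<phi> - a * v2 * sin \<phi>)
      = a * (cos (\<theta> + \<phi>) - cos \<phi> + \<theta> * sin \<phi>) + 2 * v1 * t * (cos (\<theta> + \<phi>) - cos \<phi>)"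
    by (simp add: \<theta>_def algebra_simps)
  also have "\<bar>\<dots>\<bar> \<le> \<bar>a\<bar> * \<bar>cos (\<theta> + \<phi>) - cos \<phi> + \<theta> * sin \<phi>\<bar> + 2 * \<bar>v1\<bar> * \<bar>t\<bar> * \<bar>cos (\<theta> + \<phi>) - cos \<phi>\<bar>"
    by (rule order.trans[OF abs_triangle_ineq]) (simp add: abs_mult)
  also have "\<dots> \<le> 1 * \<theta>\<^sup>2 + 2 * \<bar>v1\<bar> * \<bar>t\<bar> * \<bar>\<theta>\<bar>"
    by (rule add_mono[OF mult_mono[OF a abs_cos_add_taylor_le] mult_left_mono[OF lip]]) simp_all
  also have "\<dots> = (v2\<^sup>2 + 2 * \<bar>v1\<bar> * \<bar>v2\<bar>) * t\<^sup>2"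
    by (simp add: \<theta>_def abs_mult power_mult_distrib power2_eq_square algebra_simps)
  finally show ?thesis by (simp add: \<theta>_def)
qed

lemma abs_linear_coefficient_le:
  fixes a v1 v2 \<phi> :: real
  assumes "\<bar>a\<bar> \<le> 1"
  shows "\<bar>2 * v1 * cos \<phi> - a * v2 * sin \<phi>\<bar> \<le> 2 * \<bar>v1\<bar> + \<bar>v2\<bar>"
proof -
  have "\<bar>2 * v1 * cos \<phi> - a * v2 * sin \<phi>\<bar> \<le> 2 * \<bar>v1\<bar> * \<bar>cos \<phi>\<bar> + \<bar>a\<bar> * \<bar>v2\<bar> * \<bar>sin \<phi>\<bar>"
    by (rule order.trans[OF abs_triangle_ineq4]) (simp add: abs_mult)
  also have "\<dots> \<le> 2 * \<bar>v1\<bar> * 1 + 1 * \<bar>v2\<bar> * 1"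
    using assms by (intro add_mono mult_mono) simp_all
  finally show ?thesis by simp
qed

lemma one_minus_abs_le_one_plus_mult_cos: "1 - \<bar>a\<bar> \<le> 1 + a * cos \<phi>" for a \<phi> :: real
proof -
  have "\<bar>a * cos \<phi>\<bar> \<le> \<bar>a\<bar>"
    by (simp add: abs_mult mult_left_le)
  thus ?thesis by linarith
qed

lemma cost_integrand_approx:
  fixes a v1 v2 t \<phi> :: real
  assumes a: "\<bar>a\<bar> < 1" and b: "\<bar>a + 2 * v1 * t\<bar> \<le> 1" and t: "0 \<le> t" "t \<le> 1"
  defines "m \<equiv> sqrt (1 - \<bar>a\<bar>)"
    and "A \<equiv> 2 * \<bar>v1\<bar> + \<bar>v2\<bar>" and "K \<equiv> v2\<^sup>2 + 2 * \<bar>v1\<bar> * \<bar>v2\<bar>"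
  shows "\<bar>(1/4) * (sqrt (1 + a * cos \<phi>) - sqrt (1 + (a + 2 * v1 * t) * cos (v2 * t + \<phi>)))\<^sup>2
           - (2 * v1 * cos \<phi> - a * v2 * sin \<phi>)\<^sup>2 / (16 * (1 + a * cos \<phi>)) * t\<^sup>2\<bar>
         \<le> (K / m + A * (K + A) / (2 * m^3)) * ((K + A) / m + A / (2 * m)) / 4 * t^3"
proof -
  define u where "u = 1 + a * cos \<phi>"
  define w where "w = 1 + (a + 2 * v1 * t) * cos (v2 * t + \<phi>)"
  define L where "L = t * (2 * v1 * cos \<phi> - a * v2 * sin \<phi>)"
  have m: "0 < m" "m\<^sup>2 \<le> u"
    using a one_minus_abs_le_one_plus_mult_cos[of a \<phi>] by (simp_all add: m_def u_def)
  have "\<bar>(a + 2 * v1 * t) * cos (v2 * t + \<phi>)\<bar> \<le> 1"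
    using b by (simp add: abs_mult mult_le_one)
  hence w: "0 \<le> w" by (simp add: w_def)
  have lin: "\<bar>w - u - L\<bar> \<le> K * t\<^sup>2"
    using abs_cos_perturbation_linear_le[of a v1 t v2 \<phi>] a
    by (simp add: u_def w_def L_def K_def)
  have L: "\<bar>L\<bar> \<le> A * t"
    using abs_linear_coefficient_le[of a v1 \<phi> v2] a t
    by (simp add: L_def A_def abs_mult mult.commute mult_left_mono)
  have "\<bar>w - u\<bar> \<le> K * t\<^sup>2 + A * t" using lin L by linarith
  also have "\<dots> \<le> (K + A) * t"
  proof -
    have "t\<^sup>2 \<le> t" using t by (simp add: power2_eq_square mult_left_le_one_le)
    moreover have "0 \<le> K" by (simp add: K_def)
    ultimately show ?thesis by (simp add: distrib_right mult_left_mono)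
  qed
  finally have inc: "\<bar>w - u\<bar> \<le> (K + A) * t" .
  have q: "(2 * v1 * cos \<phi> - a * v2 * sin \<phi>)\<^sup>2 / (16 * u) * t\<^sup>2 = L\<^sup>2 / (4 * u) / 4"
    by (simp add: L_def power_mult_distrib)
  have "\<bar>(1/4) * (sqrt u - sqrt w)\<^sup>2 - (2 * v1 * cos \<phi> - a * v2 * sin \<phi>)\<^sup>2 / (16 * u) * t\<^sup>2\<bar>
      = \<bar>(sqrt u - sqrt w)\<^sup>2 - L\<^sup>2 / (4 * u)\<bar> / 4"
  proof -
    have "(1/4) * x - y / 4 = (x - y) / 4" for x y :: real by simp
    thus ?thesis unfolding q by (simp only: abs_divide abs_numeral)
  qed
  also have "\<dots> \<le> (K / m + A * (K + A) / (2 * m^3)) * ((K + A) / m + A / (2 * m)) * t^3 / 4"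
    using sqrt_diff_square_approx[OF m w t(1) lin inc L] by (rule divide_right_mono) simp
  finally show ?thesis unfolding u_def w_def by simp
qed

lemma linearized_integrand_le:
  fixes a v1 v2 \<phi> :: real
  assumes a: "\<bar>a\<bar> < 1"
  shows "(2 * v1 * cos \<phi> - a * v2 * sin \<phi>)\<^sup>2 / (16 * (1 + a * cos \<phi>))
           \<le> (2 * \<bar>v1\<bar> + \<bar>v2\<bar>)\<^sup>2 / (16 * (1 - \<bar>a\<bar>))"
proof (rule frac_le)
  show "(2 * v1 * cos \<phi> - a * v2 * sin \<phi>)\<^sup>2 \<le> (2 * \<bar>v1\<bar> + \<bar>v2\<bar>)\<^sup>2"
    using abs_linear_coefficient_le[of a v1 \<phi> v2] a
    by (metis abs_ge_zero less_imp_le power2_abs power_mono)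
  show "16 * (1 - \<bar>a\<bar>) \<le> 16 * (1 + a * cos \<phi>)"
    using one_minus_abs_le_one_plus_mult_cos[of a \<phi>] by simp
qed (use a in simp_all)

lemma abs_SUP_diff_scaled_le:
  fixes f g :: "'a \<Rightarrow> real"
  assumes ne: "A \<noteq> {}" and bdd: "bdd_above (g ` A)" and c: "0 < c"
    and close: "\<And>x. x \<in> A \<Longrightarrow> \<bar>f x - g x * c\<bar> \<le> e"
  shows "\<bar>(SUP x\<in>A. f x) - (SUP x\<in>A. g x) * c\<bar> \<le> e"
proof -
  have f_le: "f x \<le> (SUP x\<in>A. g x) * c + e" if "x \<in> A" for x
  proof -
    have "g x \<le> (SUP x\<in>A. g x)" using that bdd by (rule cSUP_upper)
    thus ?thesis using close[OF that] c by (smt (verit) mult_right_mono)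
  qed
  hence "bdd_above (f ` A)" by (rule bdd_aboveI2)
  hence "g x * c \<le> (SUP x\<in>A. f x) + e" if "x \<in> A" for x
    using close[OF that] cSUP_upper[OF that] by fastforce
  hence "(SUP x\<in>A. g x) \<le> ((SUP x\<in>A. f x) + e) / c"
    using ne c by (intro cSUP_least) (auto simp: pos_le_divide_eq)
  moreover have "(SUP x\<in>A. f x) \<le> (SUP x\<in>A. g x) * c + e"
    using ne f_le by (rule cSUP_least)
  ultimately show ?thesis using c by (simp add: pos_le_divide_eq abs_le_iff)
qed

lemma SUP_cost_integrand_approx:
  fixes a v1 v2 t :: real and \<Phi> :: "real set"
  assumes \<Phi>: "\<Phi> \<noteq> {}" and a: "\<bar>a\<bar> < 1" and b: "\<bar>a + 2 * v1 * t\<bar> \<le> 1" and t: "0 < t" "t \<le> 1"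
  defines "m \<equiv> sqrt (1 - \<bar>a\<bar>)"
    and "A \<equiv> 2 * \<bar>v1\<bar> + \<bar>v2\<bar>" and "K \<equiv> v2\<^sup>2 + 2 * \<bar>v1\<bar> * \<bar>v2\<bar>"
  shows "\<bar>(SUP \<phi>\<in>\<Phi>. (1/4) * (sqrt (1 + a * cos \<phi>) - sqrt (1 + (a + 2 * v1 * t) * cos (v2 * t + \<phi>)))\<^sup>2)
           - (SUP \<phi>\<in>\<Phi>. (2 * v1 * cos \<phi> - a * v2 * sin \<phi>)\<^sup>2 / (16 * (1 + a * cos \<phi>))) * t\<^sup>2\<bar>
         \<le> (K / m + A * (K + A) / (2 * m^3)) * ((K + A) / m + A / (2 * m)) / 4 * t^3"
proof (rule abs_SUP_diff_scaled_le[OF \<Phi>])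
  show "bdd_above ((\<lambda>\<phi>. (2 * v1 * cos \<phi> - a * v2 * sin \<phi>)\<^sup>2 / (16 * (1 + a * cos \<phi>))) ` \<Phi>)"
    by (rule bdd_aboveI2) (rule linearized_integrand_le[OF a])
  show "0 < t\<^sup>2" using t by simp
  show "\<bar>(1/4) * (sqrt (1 + a * cos \<phi>) - sqrt (1 + (a + 2 * v1 * t) * cos (v2 * t + \<phi>)))\<^sup>2
          - (2 * v1 * cos \<phi> - a * v2 * sin \<phi>)\<^sup>2 / (16 * (1 + a * cos \<phi>)) * t\<^sup>2\<bar>
        \<le> (K / m + A * (K + A) / (2 * m^3)) * ((K + A) / m + A / (2 * m)) / 4 * t^3" for \<phi>
    unfolding m_def A_def K_def using t by (intro cost_integrand_approx[OF a b]) simp_all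
qed

theorem lemmaA1:
  fixes r :: real and v :: "real \<times> real"
  assumes known_formula: "\<And>s r' \<theta>. s \<in> {0..1} \<Longrightarrow> r' \<in> {0..1} \<Longrightarrow>
      TQ (qubit s 0) (qubit r' \<theta>) =
        (SUP \<phi>\<in>{0..<2*pi}. (1/4) * (sqrt (1 + (2*s - 1) * cos \<phi>)
                                   - sqrt (1 + (2*r' - 1) * cos (\<theta> + \<phi>)))^2)"
    and r: "r \<in> {0<..<1}"
  shows "(\<lambda>t. TQ (qubit r 0) (qubit (r + fst v * t) (snd v * t)) - G_coef r v * t^2)
           \<in> O[at_right 0](\<lambda>t. t^3)"
proof -
  obtain v1 v2 where v: "v = (v1, v2)" by (cases v)
  define a where "a = 2 * r - 1"
  define C where "C = (let m = sqrt (1 - \<bar>a\<bar>); A = 2 * \<bar>v1\<bar> + \<bar>v2\<bar>; K = v2\<^sup>2 + 2 * \<bar>v1\<bar> * \<bar>v2\<bar>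
    in (K / m + A * (K + A) / (2 * m^3)) * ((K + A) / m + A / (2 * m)) / 4)"
  have a: "\<bar>a\<bar> < 1" using r by (auto simp: a_def)
  have "((\<lambda>t. \<bar>a + 2 * v1 * t\<bar>) \<longlongrightarrow> \<bar>a\<bar>) (at_right 0)"
    by (auto intro!: tendsto_eq_intros)
  hence "\<forall>\<^sub>F t in at_right 0. \<bar>a + 2 * v1 * t\<bar> < 1" using a by (rule order_tendstoD)
  moreover have "\<forall>\<^sub>F t in at_right 0. t \<in> {0<..<1::real}" by (rule eventually_at_right_real) simp
  ultimately have "\<forall>\<^sub>F t in at_right 0.
      \<bar>TQ (qubit r 0) (qubit (r + fst v * t) (snd v * t)) - G_coef r v * t^2\<bar> \<le> C * \<bar>t^3\<bar>"
  proof eventually_elim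
    case (elim t)
    hence t: "0 < t" "t \<le> 1" and b: "\<bar>a + 2 * v1 * t\<bar> \<le> 1" by auto
    have r0: "r \<in> {0..1}" using r by simp
    have r': "r + v1 * t \<in> {0..1}" using b by (auto simp: a_def abs_le_iff mult.commute)
    have shift: "2 * (r + v1 * t) - 1 = a + 2 * v1 * t" by (simp add: a_def algebra_simps)
    show ?case
      using known_formula[OF r0 r', of "v2 * t"] SUP_cost_integrand_approx[OF _ a b t, of "{0..<2*pi}" v2] t
      unfolding v shift G_coef_def a_def[symmetric] by (simp add: C_def Let_def)
  qed
  thus ?thesis by (intro bigoI) simp
qed

end
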